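(* Let $X$ be a real Hilbert space, $F:X\to\mathbb{R}^n$ a $C^2$ map satisfying Assumption (A), and assume there is $C>0$ with $|z^*\mathrm{d}^2F|_u(v,w)|\leq C\|v\|_X\|w\|_X$ for all $u\in X$, all unit $z\in\mathbb{R}^n$ and all $v,w\in X$. Let $\gamma:[0,1]\to\mathbb{R}^n$ be $C^2$, $u^0\notin\tilde S$ with $F(u^0)=\gamma(0)$, and let $u(\cdot)$ solve the PLE $\frac{\partial u}{\partial s}=\mathrm{d}F|_{u(s)}^*G(u(s))^{-1}\dot\gamma(s)$, $u(0)=u^0$, on $I=[0,\sigma_0)$, where $\sigma_0:=\sup\{\sigma\in[0,1):\lambda_1(s)>0\ \forall s\in[0,\sigma]\}$. Then $\lambda_1$ is differentiable on $I$, there exists $C_0\geq0$ with $\big|\frac{\mathrm{d}\lambda_1}{\mathrm{d}s}(s)\big|\leq C_0$ for all $s\in I$, and $$\frac{\mathrm{d}\sqrt{\lambda_1}}{\mathrm{d}s}(s)=\frac{a_1(s)}{\sqrt{\lambda_1(s)}}h(s)+f(s),\qquad s\in I,$$ where $$h(s):=z_1(s)^*\mathrm{d}^2F|_{u(s)}\big(v_1(s),v_1(s)\big),\qquad f(s):=\sum_{i=2}^n\frac{a_i(s)}{\sqrt{\lambda_i(s)}}\,z_1(s)^*\mathrm{d}^2F|_{u(s)}\big(v_i(s),v_1(s)\big).$$ Moreover $f$ and $\lambda_1$ are bounded on $I$.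
   Context: $X$ is a real Hilbert space identified with its dual; $\mathrm{d}F|_u^*$ is the adjoint of $\mathrm{d}F|_u$; $G(u):=\mathrm{d}F|_u\mathrm{d}F|_u^*$ with ordered eigenvalues $\lambda_1(u)\leq\cdots\leq\lambda_n(u)$; $\tilde S:=\{u:\det G(u)=0\}$. For $z\in\mathbb{R}^n$, $\phi_z(u):=\mathrm{d}F|_u^*z$ and $z^*\mathrm{d}^2F|_u$ is the bilinear form $(v,w)\mapsto\mathrm{d}\phi_z|_u(v)(w)=\langle z,\mathrm{d}^2F|_u(v,w)\rangle$. Assumption (A): there exists $\lambda_0>0$ with $\lambda_i(u)\geq\lambda_0$ for $i=2,\dots,n$ and all $u$. Along the solution, $\lambda_i(s):=\lambda_i(u(s))$; $z_1(s),\dots,z_n(s)$ are orthonormal unit eigenvectors of $G(u(s))$ for $\lambda_1(s),\dots,\lambda_n(s)$, chosen continuous in $s$ with $z_1$ differentiable on $I$; $a_i(s):=\langle\dot\gamma(s),z_i(s)\rangle$ (so $\dot\gamma=\sum_ia_iz_i$); and $v_i(s):=\mathrm{d}F|_{u(s)}^*z_i(s)/\sqrt{\lambda_i(s)}$ (unit vectors in $X$). *)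

theory Defs
  imports "HOL-Analysis.Analysis"
begin

definition Gop :: "('a::real_inner \<Rightarrow>\<^sub>L (real^'n)) \<Rightarrow> real^'n \<Rightarrow> real^'n" where
  "Gop L = (\<lambda>z. blinfun_apply L (adjoint (blinfun_apply L) z))"

definition ordered_eigs :: "(real^'n \<Rightarrow> real^'n) \<Rightarrow> (nat \<Rightarrow> real) \<Rightarrow> bool" where
  "ordered_eigs A lam \<longleftrightarrow>
     (\<forall>i j. 1 \<le> i \<longrightarrow> i \<le> j \<longrightarrow> j \<le> CARD('n) \<longrightarrow> lam i \<le> lam j) \<and>
     (\<forall>i. i \<notin> {1..CARD('n)} \<longrightarrow> lam i = 0) \<and>
     (\<exists>z::nat \<Rightarrow> real^'n.
        (\<forall>i\<in>{1..CARD('n)}. \<forall>j\<in>{1..CARD('n)}. z i \<bullet> z j = (if i = j then 1 else 0)) \<and>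
        (\<forall>i\<in>{1..CARD('n)}. A (z i) = lam i *\<^sub>R z i))"

definition eigval :: "(real^'n \<Rightarrow> real^'n) \<Rightarrow> nat \<Rightarrow> real" where
  "eigval A i = (THE lam. ordered_eigs A lam) i"

end

(*
  Along the flow, lambda_1 = |dF^* z_1|^2. Differentiating this identity, the contribution of
  z_1' drops out because dF dF^* z_1 = lambda_1 z_1 and z_1' is orthogonal to the unit vector
  z_1 (Hellmann-Feynman), leaving lambda_1' = 2 z_1^* d^2F(u')(dF^* z_1). Expanding
  u' = dF^* G^{-1} gamma' in the eigenbasis gives u' = sum_i a_i / sqrt lambda_i v_i, and
  dF^* z_1 = sqrt lambda_1 v_1, which is the formula for (sqrt lambda_1)'.

  The bound on d^2F and Assumption (A) make f bounded, so |lambda_1'| <= A + B sqrt lambda_1.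
  Hence sqrt (1 + lambda_1) has bounded derivative on the bounded interval I, so lambda_1 is
  bounded, and then so is lambda_1'. The adjoint dF^* exists by the Riesz representation
  theorem, obtained from the nearest-point property of closed convex sets in Hilbert space.
*)

theory Submission
  imports Defs
begin

section \<open>Riesz representation and adjoints in Hilbert spaces\<close>

lemma parallelogram_law:
  fixes x y :: "'a::real_inner"
  shows "norm (x + y)^2 + norm (x - y)^2 = 2 * norm x ^ 2 + 2 * norm y ^ 2"
  by (simp add: power2_norm_eq_inner inner_add_left inner_add_right inner_diff_left
      inner_diff_right inner_commute)

lemma convex_near_minimizers_close:
  fixes K :: "'a::real_inner set"
  assumes "convex K" "k \<in> K" "l \<in> K"
    and below: "\<And>m. m \<in> K \<Longrightarrow> d \<le> norm (x - m)" and "0 \<le> d"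
  shows "norm (k - l)^2 \<le> 2 * (norm (x - k)^2 - d^2) + 2 * (norm (x - l)^2 - d^2)"
proof -
  have "(1/2) *\<^sub>R (k + l) \<in> K"
    using assms by (simp add: convexD scaleR_right_distrib)
  then have "d^2 \<le> norm (x - (1/2) *\<^sub>R (k + l))^2"
    using below \<open>0 \<le> d\<close> by (simp add: power_mono)
  also have "4 * norm (x - (1/2) *\<^sub>R (k + l))^2 = norm ((x - k) + (x - l))^2"
  proof -
    have "(x - k) + (x - l) = 2 *\<^sub>R (x - (1/2) *\<^sub>R (k + l))"
      by (simp add: algebra_simps scaleR_2)
    then show ?thesis by (simp add: power_mult_distrib)
  qed
  finally show ?thesis
    using parallelogram_law[of "x - k" "x - l"] by (simp add: norm_minus_commute)
qed

lemma convex_minimizing_sequence_Cauchy: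
  fixes K :: "'a::real_inner set"
  assumes "convex K" and ks: "\<And>m. ks m \<in> K"
    and below: "\<And>k. k \<in> K \<Longrightarrow> d \<le> norm (x - k)" and "0 \<le> d"
    and close: "\<And>m. norm (x - ks m)^2 \<le> d^2 + \<epsilon> m" and "\<epsilon> \<longlonglongrightarrow> 0"
  shows "Cauchy ks"
proof (rule metric_CauchyI)
  fix e :: real assume "e > 0"
  then obtain M where M: "\<And>m. M \<le> m \<Longrightarrow> \<bar>\<epsilon> m\<bar> < e^2 / 4"
    using LIMSEQ_D[OF \<open>\<epsilon> \<longlonglongrightarrow> 0\<close>, of "e^2 / 4"] by auto
  have "dist (ks m) (ks l) < e" if "M \<le> m" "M \<le> l" for m l
  proof -
    have "norm (ks m - ks l)^2 \<le> 2 * (norm (x - ks m)^2 - d^2) + 2 * (norm (x - ks l)^2 - d^2)"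
      by (rule convex_near_minimizers_close[OF \<open>convex K\<close> ks ks below \<open>0 \<le> d\<close>])
    also have "\<dots> \<le> 2 * \<epsilon> m + 2 * \<epsilon> l"
      using close[of m] close[of l] by simp
    also have "\<dots> < e^2"
      using M[OF that(1)] M[OF that(2)] by simp
    finally show ?thesis
      using \<open>e > 0\<close> by (simp add: dist_norm power_less_imp_less_base)
  qed
  then show "\<exists>M. \<forall>m\<ge>M. \<forall>n\<ge>M. dist (ks m) (ks n) < e" by blast
qed

lemma closed_convex_nearest_point:
  fixes K :: "'a::{real_inner,complete_space} set"
  assumes "closed K" "convex K" "K \<noteq> {}"
  obtains k0 where "k0 \<in> K" "\<And>k. k \<in> K \<Longrightarrow> norm (x - k0) \<le> norm (x - k)"
proof -
  define d where "d = infdist x K"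
  have d_le: "d \<le> norm (x - k)" if "k \<in> K" for k
    using infdist_le[OF that] by (simp add: d_def dist_norm)
  have "0 \<le> d"
    by (simp add: d_def infdist_nonneg)
  have "\<exists>k\<in>K. norm (x - k)^2 < d^2 + inverse (real (Suc m))" for m
  proof -
    have "d < sqrt (d^2 + inverse (real (Suc m)))"
      using \<open>0 \<le> d\<close> by (simp add: real_less_rsqrt)
    then obtain k where "k \<in> K" "dist x k < sqrt (d^2 + inverse (real (Suc m)))"
      using \<open>K \<noteq> {}\<close> by (auto simp: d_def infdist_notempty cINF_less_iff)
    then show ?thesis
      using real_le_lsqrt[of "norm (x - k)" "d^2 + inverse (real (Suc m))"]
      by (auto simp: dist_norm not_le[symmetric])
  qed
  then obtain ks where ks: "\<And>m. ks m \<in> K"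
    and ks_close: "\<And>m. norm (x - ks m)^2 \<le> d^2 + inverse (real (Suc m))"
    by (metis less_imp_le)
  obtain k0 where k0: "ks \<longlonglongrightarrow> k0"
    using convex_minimizing_sequence_Cauchy[OF \<open>convex K\<close> ks d_le \<open>0 \<le> d\<close> ks_close
        LIMSEQ_inverse_real_of_nat]
    by (auto simp: Cauchy_convergent_iff convergent_def)
  show ?thesis
  proof
    show "k0 \<in> K" using closed_sequentially[OF \<open>closed K\<close>] ks k0 by blast
    have "norm (x - k0)^2 \<le> d^2"
    proof (rule LIMSEQ_le)
      show "(\<lambda>m. norm (x - ks m)^2) \<longlonglongrightarrow> norm (x - k0)^2"
        by (intro tendsto_intros k0)
      show "(\<lambda>m. d^2 + inverse (real (Suc m))) \<longlonglongrightarrow> d^2"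
        using tendsto_add[OF tendsto_const LIMSEQ_inverse_real_of_nat] by simp
    qed (use ks_close in blast)
    then show "norm (x - k0) \<le> norm (x - k)" if "k \<in> K" for k
      using d_le[OF that] \<open>0 \<le> d\<close> by (simp add: power2_le_iff_abs_le)
  qed
qed

lemma nearest_point_subspace_orthogonal:
  fixes K :: "'a::real_inner set"
  assumes "subspace K" "k0 \<in> K" and nearest: "\<And>k. k \<in> K \<Longrightarrow> norm (x - k0) \<le> norm (x - k)"
    and "k \<in> K"
  shows "(x - k0) \<bullet> k = 0"
proof -
  define t where "t = ((x - k0) \<bullet> k) / (k \<bullet> k)"
  have "k0 + t *\<^sub>R k \<in> K"
    using assms by (simp add: subspace_add subspace_scale)
  then have "norm (x - k0)^2 \<le> norm ((x - k0) - t *\<^sub>R k)^2"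
    using nearest by (simp add: power_mono algebra_simps)
  also have "\<dots> = norm (x - k0)^2 - 2 * t * ((x - k0) \<bullet> k) + t^2 * (k \<bullet> k)"
    unfolding power2_norm_eq_inner
    by (simp add: inner_diff_left inner_diff_right inner_commute power2_eq_square algebra_simps)
  also have "\<dots> = norm (x - k0)^2 - ((x - k0) \<bullet> k)^2 / (k \<bullet> k)"
    by (cases "k = 0") (simp_all add: t_def field_simps power2_eq_square)
  finally have "((x - k0) \<bullet> k)^2 / (k \<bullet> k) \<le> 0" by simp
  show ?thesis
  proof (cases "k = 0")
    case False
    then have "k \<bullet> k > 0" by simp
    with \<open>((x - k0) \<bullet> k)^2 / (k \<bullet> k) \<le> 0\<close> have "((x - k0) \<bullet> k)^2 \<le> 0"
      by (simp add: divide_le_0_iff)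
    then show ?thesis by simp
  qed simp
qed

lemma riesz_representation:
  fixes \<phi> :: "'a::{real_inner,complete_space} \<Rightarrow> real"
  assumes "bounded_linear \<phi>"
  obtains w where "\<And>x. \<phi> x = x \<bullet> w"
proof (cases "\<forall>x. \<phi> x = 0")
  case True
  then show ?thesis by (intro that[of 0]) simp
next
  case False
  interpret \<phi>: bounded_linear \<phi> by fact
  define K where "K = {k. \<phi> k = 0}"
  obtain x where "\<phi> x \<noteq> 0"
    using False by blast
  define x1 where "x1 = (1 / \<phi> x) *\<^sub>R x"
  have x1: "\<phi> x1 = 1"
    using \<open>\<phi> x \<noteq> 0\<close> by (simp add: x1_def \<phi>.scale)
  have "subspace K" by (simp add: K_def subspace_def \<phi>.zero \<phi>.add \<phi>.scale)
  moreover have "closed K" unfolding K_def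
    by (intro closed_Collect_eq linear_continuous_on continuous_on_const assms)
  ultimately obtain k0 where k0: "k0 \<in> K" "\<And>k. k \<in> K \<Longrightarrow> norm (x1 - k0) \<le> norm (x1 - k)"
    using closed_convex_nearest_point[of K x1] subspace_imp_convex subspace_0 by blast
  define y where "y = x1 - k0"
  have y_orth: "y \<bullet> k = 0" if "k \<in> K" for k
    unfolding y_def using nearest_point_subspace_orthogonal[OF \<open>subspace K\<close> k0 that] .
  have "\<phi> y = 1" using k0 x1 by (simp add: y_def K_def \<phi>.diff)
  then have "y \<bullet> y \<noteq> 0" by auto
  show ?thesis
  proof (rule that)
    fix x
    have "x - \<phi> x *\<^sub>R y \<in> K" using \<open>\<phi> y = 1\<close> by (simp add: K_def \<phi>.diff \<phi>.scale)
    then have "y \<bullet> (x - \<phi> x *\<^sub>R y) = 0"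
      by (rule y_orth)
    then have "x \<bullet> y = \<phi> x * (y \<bullet> y)"
      by (simp add: inner_diff_right inner_commute)
    then show "\<phi> x = x \<bullet> ((1 / (y \<bullet> y)) *\<^sub>R y)"
      using \<open>y \<bullet> y \<noteq> 0\<close> by (simp add: field_simps)
  qed
qed

lemma adjoint_works_complete:
  fixes L :: "'a::{real_inner,complete_space} \<Rightarrow> 'b::real_inner"
  assumes "bounded_linear L"
  shows "x \<bullet> adjoint L y = L x \<bullet> y"
proof -
  have "\<exists>w. \<forall>x. L x \<bullet> y = x \<bullet> w" for y
    using riesz_representation[of "\<lambda>x. L x \<bullet> y"]
      bounded_linear_inner_left_comp[OF assms] by metis
  then have "\<exists>L'. \<forall>x y. L x \<bullet> y = x \<bullet> L' y"
    by metis
  then have "\<forall>x y. L x \<bullet> y = x \<bullet> adjoint L y"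
    unfolding adjoint_def by (rule someI_ex)
  then show ?thesis by simp
qed

lemma adjoint_blinfun:
  fixes L :: "'a::{real_inner,complete_space} \<Rightarrow>\<^sub>L 'b::real_inner"
  shows "x \<bullet> adjoint L y = L x \<bullet> y"
  by (rule adjoint_works_complete) (rule blinfun.bounded_linear_right)

lemma norm_adjoint_blinfun_le:
  fixes L :: "'a::{real_inner,complete_space} \<Rightarrow>\<^sub>L 'b::real_inner"
  shows "norm (adjoint L y) \<le> norm L * norm y"
proof -
  have "norm (adjoint L y)^2 = L (adjoint L y) \<bullet> y"
    by (simp add: adjoint_blinfun power2_norm_eq_inner)
  also have "\<dots> \<le> norm (L (adjoint L y)) * norm y"
    by (rule norm_cauchy_schwarz)
  also have "\<dots> \<le> norm L * norm (adjoint L y) * norm y"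
    by (intro mult_right_mono norm_blinfun) simp
  finally show ?thesis
    by (cases "adjoint L y = 0") (simp_all add: power2_eq_square mult.commute)
qed

lemma bounded_bilinear_adjoint_blinfun:
  "bounded_bilinear (\<lambda>L::'a::{real_inner,complete_space} \<Rightarrow>\<^sub>L 'b::real_inner.
    adjoint (blinfun_apply L))"
proof
  fix L L' :: "'a \<Rightarrow>\<^sub>L 'b" and y y' :: 'b and r :: real
  show "adjoint (L + L') y = adjoint L y + adjoint L' y"
    by (rule vector_eq_ldot[THEN iffD1])
      (simp add: adjoint_blinfun inner_add_right blinfun.add_left inner_add_left)
  show "adjoint L (y + y') = adjoint L y + adjoint L y'"
    by (rule vector_eq_ldot[THEN iffD1]) (simp add: adjoint_blinfun inner_add_right)
  show "adjoint (r *\<^sub>R L) y = r *\<^sub>R adjoint L y"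
    by (rule vector_eq_ldot[THEN iffD1]) (simp add: adjoint_blinfun blinfun.scaleR_left)
  show "adjoint L (r *\<^sub>R y) = r *\<^sub>R adjoint L y"
    by (rule vector_eq_ldot[THEN iffD1]) (simp add: adjoint_blinfun)
  show "\<exists>K. \<forall>(L::'a \<Rightarrow>\<^sub>L 'b) y. norm (adjoint (blinfun_apply L) y) \<le> norm L * norm y * K"
    by (intro exI[of _ 1] allI) (simp add: norm_adjoint_blinfun_le)
qed

section \<open>The Gram operator\<close>

lemma linear_Gop:
  fixes L :: "'a::{real_inner,complete_space} \<Rightarrow>\<^sub>L (real^'n)"
  shows "linear (Gop L)"
  unfolding Gop_def
  by (intro bounded_linear.linear bounded_linear_compose[OF blinfun.bounded_linear_right]
      bounded_bilinear.bounded_linear_right[OF bounded_bilinear_adjoint_blinfun])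

lemma inner_Gop:
  fixes L :: "'a::{real_inner,complete_space} \<Rightarrow>\<^sub>L (real^'n)"
  shows "y \<bullet> Gop L z = adjoint L y \<bullet> adjoint L z"
  using adjoint_blinfun[of "adjoint L z" L y] by (simp add: Gop_def inner_commute)

lemma Gop_eigenvalue_eq:
  fixes L :: "'a::{real_inner,complete_space} \<Rightarrow>\<^sub>L (real^'n)"
  assumes "Gop L w = \<mu> *\<^sub>R w" "norm w = 1"
  shows "norm (adjoint L w)^2 = \<mu>"
  using inner_Gop[of w L w] assms by (simp add: power2_norm_eq_inner norm_eq_1)

lemma Gop_eigenvalue_pos:
  fixes L :: "'a::{real_inner,complete_space} \<Rightarrow>\<^sub>L (real^'n)"
  assumes "det (matrix (Gop L)) \<noteq> 0" "Gop L w = \<mu> *\<^sub>R w" "norm w = 1"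
  shows "\<mu> > 0"
proof -
  have "\<mu> \<ge> 0"
    using Gop_eigenvalue_eq[OF assms(2,3)] by (metis zero_le_power2)
  moreover have "\<mu> \<noteq> 0"
  proof
    assume "\<mu> = 0"
    have "matrix (Gop L) *v x = Gop L x" for x
      using matrix_vector_mul(2)[OF linear_Gop] by metis
    then have "matrix (Gop L) *v w = matrix (Gop L) *v 0"
      using assms(2) \<open>\<mu> = 0\<close> linear_0[OF linear_Gop[of L]] by simp
    moreover have "inj ((*v) (matrix (Gop L)))"
      using assms(1) inj_matrix_vector_mult invertible_det_nz by blast
    ultimately have "w = 0"
      by (metis injD)
    then show False
      using \<open>norm w = 1\<close> by simp
  qed
  ultimately show ?thesis by simp
qed

lemma orthonormal_family_expansion:
  fixes z :: "'i \<Rightarrow> 'b::euclidean_space"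
  assumes "finite J" "card J = DIM('b)"
    and orthonormal: "\<And>i j. i \<in> J \<Longrightarrow> j \<in> J \<Longrightarrow> z i \<bullet> z j = (if i = j then 1 else 0)"
  shows "(\<Sum>i\<in>J. (y \<bullet> z i) *\<^sub>R z i) = y"
proof -
  have "inj_on z J"
    by (rule inj_onI) (metis orthonormal zero_neq_one)
  have orth: "pairwise orthogonal (z ` J)"
    using orthonormal by (auto simp: pairwise_def orthogonal_def)
  have unit: "norm b = 1" if "b \<in> z ` J" for b
    using that orthonormal by (auto simp: norm_eq_sqrt_inner)
  have "independent (z ` J)"
    using orth unit by (intro pairwise_orthogonal_independent) force+
  moreover have "card (z ` J) = DIM('b)"
    using card_image[OF \<open>inj_on z J\<close>] assms(2) by simp
  ultimately have "span (z ` J) = UNIV"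
    by (metis card_eq_dim dim_UNIV span_UNIV subset_UNIV order_refl card_ge_dim_independent
        top.extremum_uniqueI)
  then have "(\<Sum>b\<in>z ` J. (y \<bullet> b) *\<^sub>R b) = y"
    using orthonormal_basis_expand[OF orth unit] \<open>finite J\<close> by simp
  then show ?thesis
    by (simp add: sum.reindex[OF \<open>inj_on z J\<close>])
qed

lemma matrix_inv_mult_left:
  fixes A :: "'a::semiring_1^'n^'m"
  assumes "invertible A"
  shows "matrix_inv A ** A = mat 1"
  using assms unfolding invertible_def matrix_inv_def by (rule someI2_ex) simp

lemma matrix_inv_eigen_expansion:
  fixes A :: "real^'n \<Rightarrow> real^'n" and z :: "'i \<Rightarrow> real^'n"
  assumes "linear A" "finite J" "card J = CARD('n)"
    and orthonormal: "\<And>i j. i \<in> J \<Longrightarrow> j \<in> J \<Longrightarrow> z i \<bullet> z j = (if i = j then 1 else 0)"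
    and eigen: "\<And>i. i \<in> J \<Longrightarrow> A (z i) = \<mu> i *\<^sub>R z i"
    and nonzero: "\<And>i. i \<in> J \<Longrightarrow> \<mu> i \<noteq> 0"
  shows "matrix_inv (matrix A) *v y = (\<Sum>i\<in>J. (y \<bullet> z i / \<mu> i) *\<^sub>R z i)"
proof -
  define B where "B y = (\<Sum>i\<in>J. (y \<bullet> z i / \<mu> i) *\<^sub>R z i)" for y
  have AB: "A (B y) = y" for y
  proof -
    have "A (B y) = (\<Sum>i\<in>J. (y \<bullet> z i) *\<^sub>R z i)"
      using eigen nonzero by (simp add: B_def linear_sum[OF \<open>linear A\<close>]
          linear_cmul[OF \<open>linear A\<close>])
    also have "\<dots> = y"
      using orthonormal_family_expansion[OF \<open>finite J\<close> _ orthonormal] \<open>card J = CARD('n)\<close>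
      by simp
    finally show ?thesis .
  qed
  have Mv: "matrix A *v x = A x" for x
    using matrix_vector_mul(2)[OF \<open>linear A\<close>] by metis
  have "surj ((*v) (matrix A))"
    by (metis AB Mv surjI)
  then have "invertible (matrix A)"
    using invertible_right_inverse matrix_right_invertible_surjective by blast
  then have "matrix_inv (matrix A) *v (matrix A *v B y) = B y"
    by (simp add: matrix_vector_mul_assoc matrix_inv_mult_left)
  then show ?thesis
    unfolding Mv AB by (simp add: B_def)
qed

section \<open>Derivative of an eigenvalue and a growth bound\<close>

lemma has_vector_derivative_unit_orthogonal:
  fixes w :: "real \<Rightarrow> 'a::real_inner"
  assumes w': "(w has_vector_derivative w') (at s within I)"
    and unit: "\<And>t. t \<in> I \<Longrightarrow> norm (w t) = 1"
    and "s \<in> I" "at s within I \<noteq> bot"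
  shows "w s \<bullet> w' = 0"
proof -
  have "((\<lambda>t. w t \<bullet> w t) has_vector_derivative w s \<bullet> w' + w' \<bullet> w s) (at s within I)"
    using bounded_bilinear.has_vector_derivative[OF bounded_bilinear_inner w' w'] by simp
  moreover have "((\<lambda>t. w t \<bullet> w t) has_vector_derivative 0) (at s within I)"
    by (rule has_vector_derivative_transform[OF \<open>s \<in> I\<close> _ has_vector_derivative_const[of 1]])
      (simp add: unit norm_eq_1[symmetric])
  ultimately have "w s \<bullet> w' + w' \<bullet> w s = 0"
    using vector_derivative_unique_within[OF \<open>at s within I \<noteq> bot\<close>] by blast
  then show ?thesis
    by (simp add: inner_commute)
qed

text \<open>Hellmann--Feynman: differentiating \<open>\<mu> = \<parallel>L\<^sup>* w\<parallel>\<^sup>2\<close>, the term containing \<open>w'\<close> vanishes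
  because \<open>L L\<^sup>* w = \<mu> w\<close> and \<open>w' \<bottom> w\<close>.\<close>

lemma Gop_eigenvalue_has_derivative:
  fixes L :: "real \<Rightarrow> ('a::{real_inner,complete_space} \<Rightarrow>\<^sub>L (real^'n))"
    and w :: "real \<Rightarrow> real^'n"
  assumes L': "(L has_vector_derivative L') (at s within I)"
    and w': "(w has_vector_derivative w') (at s within I)"
    and unit: "\<And>t. t \<in> I \<Longrightarrow> norm (w t) = 1"
    and eigen: "\<And>t. t \<in> I \<Longrightarrow> Gop (L t) (w t) = \<mu> t *\<^sub>R w t"
    and "s \<in> I" "at s within I \<noteq> bot"
  shows "(\<mu> has_real_derivative 2 * (w s \<bullet> L' (adjoint (L s) (w s)))) (at s within I)"
proof -
  let ?P = "\<lambda>t. adjoint (L t) (w t)"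
  let ?P' = "adjoint (L s) w' + adjoint L' (w s)"
  have P': "(?P has_vector_derivative ?P') (at s within I)"
    using bounded_bilinear.has_vector_derivative[OF bounded_bilinear_adjoint_blinfun L' w'] by simp
  have PP': "((\<lambda>t. ?P t \<bullet> ?P t) has_vector_derivative ?P s \<bullet> ?P' + ?P' \<bullet> ?P s) (at s within I)"
    using bounded_bilinear.has_vector_derivative[OF bounded_bilinear_inner P' P'] by simp
  have "\<mu> t = ?P t \<bullet> ?P t" if "t \<in> I" for t
    using Gop_eigenvalue_eq[OF eigen[OF that] unit[OF that]] by (simp add: power2_norm_eq_inner)
  then have \<mu>': "(\<mu> has_vector_derivative ?P s \<bullet> ?P' + ?P' \<bullet> ?P s) (at s within I)"
    by (rule has_vector_derivative_transform[OF \<open>s \<in> I\<close> _ PP'])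
  have "?P s \<bullet> adjoint (L s) w' = \<mu> s * (w s \<bullet> w')"
    using inner_Gop[of w' "L s" "w s"] eigen[OF \<open>s \<in> I\<close>] by (simp add: inner_commute)
  also have "w s \<bullet> w' = 0"
    by (rule has_vector_derivative_unit_orthogonal[OF w' unit \<open>s \<in> I\<close> \<open>at s within I \<noteq> bot\<close>])
  finally have "?P s \<bullet> ?P' = w s \<bullet> L' (?P s)"
    using adjoint_blinfun[of "?P s" L' "w s"] by (simp add: inner_add_right inner_commute)
  with \<mu>' show ?thesis
    by (simp add: has_real_derivative_iff_has_vector_derivative inner_commute)
qed

lemma bounded_above_if_derivative_sqrt_growth:
  fixes \<phi> D :: "real \<Rightarrow> real"
  assumes "convex I" "bounded I"
    and deriv: "\<And>s. s \<in> I \<Longrightarrow> (\<phi> has_real_derivative D s) (at s within I)"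
    and nonneg: "\<And>s. s \<in> I \<Longrightarrow> 0 \<le> \<phi> s"
    and growth: "\<And>s. s \<in> I \<Longrightarrow> \<bar>D s\<bar> \<le> A + B * sqrt (\<phi> s)"
    and "0 \<le> A" "0 \<le> B"
  obtains K where "\<And>s. s \<in> I \<Longrightarrow> \<phi> s \<le> K"
proof (cases "I = {}")
  case False
  then obtain s0 where "s0 \<in> I" by blast
  obtain R where R: "\<And>s. s \<in> I \<Longrightarrow> \<bar>s\<bar> \<le> R"
    using \<open>bounded I\<close> by (auto simp: bounded_iff)
  \<comment> \<open>\<open>sqrt \<phi>\<close> may have unbounded derivative where \<open>\<phi>\<close> vanishes;
    \<open>sqrt (1 + \<phi>) \<ge> 1\<close> does not\<close>
  define g where "g t = sqrt (1 + \<phi> t)" for t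
  have g_ge: "1 \<le> g s" "sqrt (\<phi> s) \<le> g s" if "s \<in> I" for s
    using nonneg[OF that] by (simp_all add: g_def)
  have g': "(g has_real_derivative inverse (g s) / 2 * D s) (at s within I)" if "s \<in> I" for s
  proof -
    have "0 < 1 + \<phi> s" using nonneg[OF that] by simp
    from DERIV_chain2[OF DERIV_real_sqrt[OF this] DERIV_add[OF DERIV_const deriv[OF that]]]
    show ?thesis by (simp add: g_def[abs_def])
  qed
  have g'_bound: "norm (inverse (g s) / 2 * D s) \<le> (A + B) / 2" if "s \<in> I" for s
  proof -
    have "A \<le> A * g s"
      using mult_left_mono[OF g_ge(1)[OF that] \<open>0 \<le> A\<close>] by simp
    moreover have "B * sqrt (\<phi> s) \<le> B * g s"
      using mult_left_mono[OF g_ge(2)[OF that] \<open>0 \<le> B\<close>] .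
    ultimately have "\<bar>D s\<bar> \<le> (A + B) * g s"
      using growth[OF that] by (simp add: distrib_right)
    then show ?thesis
      using g_ge(1)[OF that] by (simp add: abs_mult field_simps)
  qed
  have g_le: "g s \<le> g s0 + (A + B) * R" if "s \<in> I" for s
  proof -
    have "norm (g s - g s0) \<le> (A + B) / 2 * norm (s - s0)"
      by (rule field_differentiable_bound[OF \<open>convex I\<close> g' g'_bound that \<open>s0 \<in> I\<close>])
    also have "\<dots> \<le> (A + B) / 2 * (2 * R)"
      using R[OF that] R[OF \<open>s0 \<in> I\<close>] \<open>0 \<le> A\<close> \<open>0 \<le> B\<close>
      by (intro mult_left_mono) auto
    finally show ?thesis by simp
  qed
  have "\<phi> s \<le> (g s0 + (A + B) * R)^2" if "s \<in> I" for s
  proof -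
    have "\<phi> s \<le> (g s)^2"
      using nonneg[OF that] by (simp add: g_def)
    also have "\<dots> \<le> (g s0 + (A + B) * R)^2"
      using g_ge(1)[OF that] g_le[OF that] by (intro power_mono) auto
    finally show ?thesis .
  qed
  then show ?thesis by (rule that)
qed (rule that, simp)

lemma positive_below_Sup_positive_prefix:
  fixes p :: "real \<Rightarrow> real"
  assumes s: "s \<in> {0..<Sup {\<sigma>. \<sigma> \<in> {0..<1} \<and> (\<forall>t\<in>{0..\<sigma>}. p t > 0)}}" and "p 0 > 0"
  shows "p s > 0" "s < 1"
proof -
  let ?S = "{\<sigma>. \<sigma> \<in> {0..<1} \<and> (\<forall>t\<in>{0..\<sigma>}. p t > 0)}"
  have "0 \<in> ?S" using \<open>p 0 > 0\<close> by simp
  have "Sup ?S \<le> 1"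
    by (rule cSup_least) (use \<open>0 \<in> ?S\<close> in blast, simp)
  then show "s < 1" using s by simp
  have "s < Sup ?S" using s by simp
  then obtain \<sigma> where "\<sigma> \<in> ?S" "s < \<sigma>"
    using less_cSupD[of ?S s] \<open>0 \<in> ?S\<close> by blast
  then show "p s > 0" using s by simp
qed

section \<open>Solutions of the lifting equation on the interval where \<open>\<lambda>\<^sub>1 > 0\<close>\<close>

text \<open>\<open>lam0\<close> is the constant of Assumption (A); \<open>lam\<close>, \<open>a\<close>, \<open>v\<close>, \<open>h\<close>, \<open>f\<close> below are the quantities
  \<open>\<lambda>\<^sub>i, a\<^sub>i, v\<^sub>i, h, f\<close> of the statement.\<close>

locale PLE_solution =
  fixes DF :: "'a::{real_inner,complete_space} \<Rightarrow> ('a \<Rightarrow>\<^sub>L (real^'n))"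
    and D2F :: "'a \<Rightarrow> ('a \<Rightarrow>\<^sub>L ('a \<Rightarrow>\<^sub>L (real^'n)))"
    and \<gamma>' :: "real \<Rightarrow> real^'n"
    and u :: "real \<Rightarrow> 'a"
    and z :: "nat \<Rightarrow> real \<Rightarrow> real^'n"
    and I :: "real set"
    and \<sigma>0 C lam0 \<Gamma> :: real
  assumes I_eq: "I = {0..<\<sigma>0}"
    and DF_deriv: "\<And>x. (DF has_derivative blinfun_apply (D2F x)) (at x)"
    and lam0_pos: "lam0 > 0"
    and eigval_ge_lam0: "\<And>x i. i \<in> {2..CARD('n)} \<Longrightarrow> lam0 \<le> eigval (Gop (DF x)) i"
    and C_nonneg: "0 \<le> C"
    and D2F_bound: "\<And>x w v y. norm w = 1 \<Longrightarrow>
        \<bar>w \<bullet> blinfun_apply (blinfun_apply (D2F x) v) y\<bar> \<le> C * norm v * norm y"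
    and \<Gamma>_nonneg: "0 \<le> \<Gamma>"
    and \<gamma>'_bound: "\<And>s. s \<in> I \<Longrightarrow> norm (\<gamma>' s) \<le> \<Gamma>"
    and I_less_1: "\<And>s. s \<in> I \<Longrightarrow> s < 1"
    and eigval_1_pos: "\<And>s. s \<in> I \<Longrightarrow> eigval (Gop (DF (u s))) 1 > 0"
    and u_PLE: "\<And>s. s \<in> I \<Longrightarrow>
        (u has_vector_derivative
           adjoint (blinfun_apply (DF (u s))) (matrix_inv (matrix (Gop (DF (u s)))) *v \<gamma>' s))
        (at s within I)"
    and z_orth: "\<And>s i j. s \<in> I \<Longrightarrow>
        i \<in> {1..CARD('n)} \<Longrightarrow> j \<in> {1..CARD('n)} \<Longrightarrow> z i s \<bullet> z j s = (if i = j then 1 else 0)"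
    and z_eig: "\<And>s i. s \<in> I \<Longrightarrow>
        i \<in> {1..CARD('n)} \<Longrightarrow> Gop (DF (u s)) (z i s) = eigval (Gop (DF (u s))) i *\<^sub>R z i s"
    and z1_diff: "\<And>s. s \<in> I \<Longrightarrow> z 1 differentiable (at s within I)"
begin

definition lam :: "nat \<Rightarrow> real \<Rightarrow> real"
  where "lam i s = eigval (Gop (DF (u s))) i"

definition a :: "nat \<Rightarrow> real \<Rightarrow> real"
  where "a i s = \<gamma>' s \<bullet> z i s"

definition v :: "nat \<Rightarrow> real \<Rightarrow> 'a"
  where "v i s = (1 / sqrt (lam i s)) *\<^sub>R adjoint (DF (u s)) (z i s)"

definition h :: "real \<Rightarrow> real"
  where "h s = z 1 s \<bullet> D2F (u s) (v 1 s) (v 1 s)"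

definition f :: "real \<Rightarrow> real"
  where "f s = (\<Sum>i = 2..CARD('n). a i s / sqrt (lam i s) * (z 1 s \<bullet> D2F (u s) (v i s) (v 1 s)))"

lemma one_in_indices: "1 \<in> {1..CARD('n)}"
  using zero_less_card_finite[where 'a='n] by simp

lemma unit_z: "s \<in> I \<Longrightarrow> i \<in> {1..CARD('n)} \<Longrightarrow> norm (z i s) = 1"
  using z_orth[of s i i] by (simp add: norm_eq_1)

lemma z_eig_lam: "s \<in> I \<Longrightarrow> i \<in> {1..CARD('n)} \<Longrightarrow> Gop (DF (u s)) (z i s) = lam i s *\<^sub>R z i s"
  using z_eig by (simp add: lam_def)

lemma lam_pos: "s \<in> I \<Longrightarrow> i \<in> {1..CARD('n)} \<Longrightarrow> 0 < lam i s"
  using eigval_1_pos eigval_ge_lam0[of i] lam0_pos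
  by (cases "i = 1") (auto simp: lam_def intro: order.strict_trans2)

lemma adjoint_z:
  assumes "s \<in> I" "i \<in> {1..CARD('n)}"
  shows "adjoint (DF (u s)) (z i s) = sqrt (lam i s) *\<^sub>R v i s"
  using lam_pos[OF assms] by (simp add: v_def)

lemma unit_v:
  assumes "s \<in> I" "i \<in> {1..CARD('n)}" shows "norm (v i s) = 1"
proof -
  have "norm (adjoint (DF (u s)) (z i s)) = sqrt (lam i s)"
    using Gop_eigenvalue_eq[OF z_eig_lam unit_z, OF assms assms] by (metis real_sqrt_abs abs_norm_cancel)
  then show ?thesis
    using lam_pos[OF assms] by (simp add: v_def)
qed

lemma u_has_vector_derivative_expansion:
  assumes "s \<in> I"
  shows "(u has_vector_derivative (\<Sum>i=1..CARD('n). (a i s / sqrt (lam i s)) *\<^sub>R v i s))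
    (at s within I)"
proof -
  have "matrix_inv (matrix (Gop (DF (u s)))) *v \<gamma>' s
      = (\<Sum>i=1..CARD('n). (\<gamma>' s \<bullet> z i s / lam i s) *\<^sub>R z i s)"
    by (rule matrix_inv_eigen_expansion[OF linear_Gop])
      (use assms z_orth z_eig_lam lam_pos in \<open>auto simp: less_imp_neq[symmetric]\<close>)
  also have "adjoint (DF (u s)) \<dots> = (\<Sum>i=1..CARD('n). (a i s / sqrt (lam i s)) *\<^sub>R v i s)"
    unfolding bounded_bilinear.sum_right[OF bounded_bilinear_adjoint_blinfun]
      bounded_bilinear.scaleR_right[OF bounded_bilinear_adjoint_blinfun]
  proof (rule sum.cong[OF refl])
    fix i assume i: "i \<in> {1..CARD('n)}"
    have "\<gamma>' s \<bullet> z i s / lam i s * sqrt (lam i s) = a i s / sqrt (lam i s)"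
      using lam_pos[OF assms i] by (simp add: a_def field_simps abs_of_pos)
    then show "(\<gamma>' s \<bullet> z i s / lam i s) *\<^sub>R adjoint (DF (u s)) (z i s)
        = (a i s / sqrt (lam i s)) *\<^sub>R v i s"
      by (simp add: adjoint_z[OF assms i])
  qed
  finally show ?thesis
    using u_PLE[OF assms] by simp
qed

lemma nontrivial_within_I: "s \<in> I \<Longrightarrow> at s within I \<noteq> bot"
  by (auto simp: I_eq trivial_limit_within)

lemma z1_D2F_velocity_eq:
  assumes "s \<in> I"
  shows "z 1 s \<bullet> D2F (u s) (\<Sum>i=1..CARD('n). (a i s / sqrt (lam i s)) *\<^sub>R v i s)
            (adjoint (DF (u s)) (z 1 s))
    = a 1 s * h s + sqrt (lam 1 s) * f s"
proof -
  let ?t = "\<lambda>i. a i s / sqrt (lam i s) * (z 1 s \<bullet> D2F (u s) (v i s) (v 1 s))"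
  have "z 1 s \<bullet> D2F (u s) (\<Sum>i=1..CARD('n). (a i s / sqrt (lam i s)) *\<^sub>R v i s)
            (adjoint (DF (u s)) (z 1 s))
      = sqrt (lam 1 s) * (\<Sum>i=1..CARD('n). ?t i)"
    unfolding adjoint_z[OF assms one_in_indices]
    by (simp add: blinfun.sum_left blinfun.sum_right blinfun.scaleR_left blinfun.scaleR_right
        inner_sum_right sum_distrib_left algebra_simps)
  also have "(\<Sum>i=1..CARD('n). ?t i) = ?t 1 + (\<Sum>i=2..CARD('n). ?t i)"
    using sum.atLeast_Suc_atMost[of 1 "CARD('n)"] one_in_indices by (simp add: numeral_2_eq_2)
  also have "sqrt (lam 1 s) * \<dots> = a 1 s * h s + sqrt (lam 1 s) * f s"
    using lam_pos[OF assms one_in_indices] by (simp add: h_def f_def field_simps)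
  finally show ?thesis .
qed

lemma lam1_has_derivative:
  assumes "s \<in> I"
  shows "(lam 1 has_real_derivative 2 * (a 1 s * h s + sqrt (lam 1 s) * f s)) (at s within I)"
proof -
  let ?u' = "\<Sum>i=1..CARD('n). (a i s / sqrt (lam i s)) *\<^sub>R v i s"
  have "((\<lambda>t. DF (u t)) has_vector_derivative D2F (u s) ?u') (at s within I)"
    using vector_derivative_diff_chain_within[OF u_has_vector_derivative_expansion[OF assms]
        has_derivative_at_withinI[OF DF_deriv]]
    by (simp add: comp_def)
  moreover obtain z1' where "(z 1 has_vector_derivative z1') (at s within I)"
    using z1_diff[OF assms] vector_derivative_works by blast
  ultimately have "(lam 1 has_real_derivative
      2 * (z 1 s \<bullet> D2F (u s) ?u' (adjoint (DF (u s)) (z 1 s)))) (at s within I)"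
    using Gop_eigenvalue_has_derivative[where w="z 1" and \<mu>="lam 1",
        OF _ _ unit_z[OF _ one_in_indices] z_eig_lam[OF _ one_in_indices]
        assms nontrivial_within_I[OF assms]] by blast
  then show ?thesis
    by (simp only: z1_D2F_velocity_eq[OF assms])
qed

lemma sqrt_lam1_has_derivative:
  assumes "s \<in> I"
  shows "((\<lambda>t. sqrt (lam 1 t)) has_real_derivative a 1 s / sqrt (lam 1 s) * h s + f s)
    (at s within I)"
proof -
  have d: "((\<lambda>t. sqrt (lam 1 t)) has_real_derivative
      inverse (sqrt (lam 1 s)) / 2 * (2 * (a 1 s * h s + sqrt (lam 1 s) * f s))) (at s within I)"
    by (rule DERIV_chain2[OF DERIV_real_sqrt lam1_has_derivative])
      (use assms lam_pos one_in_indices in auto)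
  have "inverse (sqrt (lam 1 s)) / 2 * (2 * (a 1 s * h s + sqrt (lam 1 s) * f s))
      = a 1 s / sqrt (lam 1 s) * h s + f s"
    using lam_pos[OF assms one_in_indices] by (simp add: field_simps)
  with d show ?thesis
    by (simp only:)
qed

lemma abs_a_le: "s \<in> I \<Longrightarrow> i \<in> {1..CARD('n)} \<Longrightarrow> \<bar>a i s\<bar> \<le> \<Gamma>"
  using Cauchy_Schwarz_ineq2[of "\<gamma>' s" "z i s"] unit_z \<gamma>'_bound by (fastforce simp: a_def)

lemma abs_D2F_z1_v_le:
  "s \<in> I \<Longrightarrow> i \<in> {1..CARD('n)} \<Longrightarrow> \<bar>z 1 s \<bullet> D2F x (v i s) (v 1 s)\<bar> \<le> C"
  using D2F_bound[OF unit_z, of s 1 x "v i s" "v 1 s"] unit_v one_in_indices by simp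

lemma abs_h_le: "s \<in> I \<Longrightarrow> \<bar>h s\<bar> \<le> C"
  using abs_D2F_z1_v_le one_in_indices by (simp add: h_def)

lemma abs_f_le:
  assumes "s \<in> I"
  shows "\<bar>f s\<bar> \<le> CARD('n) * (\<Gamma> / sqrt lam0 * C)"
proof -
  have "\<bar>a i s / sqrt (lam i s) * (z 1 s \<bullet> D2F (u s) (v i s) (v 1 s))\<bar> \<le> \<Gamma> / sqrt lam0 * C"
    if "i \<in> {2..CARD('n)}" for i
  proof -
    have i: "i \<in> {1..CARD('n)}" using that by auto
    have "\<bar>a i s / sqrt (lam i s) * (z 1 s \<bullet> D2F (u s) (v i s) (v 1 s))\<bar>
        = \<bar>a i s\<bar> / sqrt (lam i s) * \<bar>z 1 s \<bullet> D2F (u s) (v i s) (v 1 s)\<bar>"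
      using lam_pos[OF assms i] by (simp add: abs_mult)
    also have "\<dots> \<le> \<Gamma> / sqrt lam0 * C"
    proof (rule mult_mono)
      show "\<bar>a i s\<bar> / sqrt (lam i s) \<le> \<Gamma> / sqrt lam0"
        using abs_a_le[OF assms i] eigval_ge_lam0[OF that] lam0_pos \<Gamma>_nonneg
        by (intro frac_le) (auto simp: lam_def)
    qed (use abs_D2F_z1_v_le[OF assms i] \<Gamma>_nonneg lam0_pos in auto)
    finally show ?thesis .
  qed
  then have "\<bar>f s\<bar> \<le> card {2..CARD('n)} * (\<Gamma> / sqrt lam0 * C)"
    unfolding f_def by (intro order.trans[OF sum_abs sum_bounded_above]) auto
  also have "\<dots> \<le> CARD('n) * (\<Gamma> / sqrt lam0 * C)"
    using \<Gamma>_nonneg lam0_pos C_nonneg by (intro mult_right_mono) auto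
  finally show ?thesis .
qed

lemma abs_lam1_derivative_le:
  assumes "s \<in> I"
  shows "\<bar>2 * (a 1 s * h s + sqrt (lam 1 s) * f s)\<bar>
    \<le> 2 * (\<Gamma> * C) + 2 * (CARD('n) * (\<Gamma> / sqrt lam0 * C)) * sqrt (lam 1 s)"
proof -
  have "\<bar>a 1 s * h s\<bar> \<le> \<Gamma> * C"
    unfolding abs_mult using abs_a_le[OF assms one_in_indices] abs_h_le[OF assms] \<Gamma>_nonneg
    by (intro mult_mono) auto
  moreover have "\<bar>sqrt (lam 1 s) * f s\<bar> = \<bar>f s\<bar> * sqrt (lam 1 s)"
    using lam_pos[OF assms one_in_indices] by (simp add: abs_mult mult.commute)
  moreover have "\<dots> \<le> CARD('n) * (\<Gamma> / sqrt lam0 * C) * sqrt (lam 1 s)"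
    by (rule mult_right_mono[OF abs_f_le[OF assms]]) (use lam_pos[OF assms one_in_indices] in simp)
  moreover have "\<bar>2 * (a 1 s * h s + sqrt (lam 1 s) * f s)\<bar>
      \<le> 2 * \<bar>a 1 s * h s\<bar> + 2 * \<bar>sqrt (lam 1 s) * f s\<bar>"
    using abs_triangle_ineq[of "a 1 s * h s" "sqrt (lam 1 s) * f s"]
    by (simp only: abs_mult abs_numeral)
  ultimately show ?thesis
    by linarith
qed

lemma lam1_bounded: obtains K where "\<And>s. s \<in> I \<Longrightarrow> lam 1 s \<le> K"
proof (rule bounded_above_if_derivative_sqrt_growth[OF _ _ lam1_has_derivative _ abs_lam1_derivative_le])
  show "convex I" by (simp add: I_eq)
  have "I \<subseteq> {0..1}"
    using I_less_1 by (force simp: I_eq)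
  then show "bounded I"
    by (rule bounded_subset[OF bounded_closed_interval])
  show "0 \<le> lam 1 s" if "s \<in> I" for s
    using lam_pos[OF that one_in_indices] by simp
qed (use \<Gamma>_nonneg C_nonneg lam0_pos in auto)

lemma lam1_derivative_bounded:
  "\<exists>C0\<ge>0. \<forall>s\<in>I. \<bar>2 * (a 1 s * h s + sqrt (lam 1 s) * f s)\<bar> \<le> C0"
proof -
  obtain K where K: "\<And>s. s \<in> I \<Longrightarrow> lam 1 s \<le> K"
    using lam1_bounded by blast
  let ?M = "CARD('n) * (\<Gamma> / sqrt lam0 * C)"
  have "\<bar>2 * (a 1 s * h s + sqrt (lam 1 s) * f s)\<bar> \<le> 2 * (\<Gamma> * C) + 2 * ?M * sqrt \<bar>K\<bar>"
    if "s \<in> I" for s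
  proof -
    have "sqrt (lam 1 s) \<le> sqrt \<bar>K\<bar>"
      using K[OF that] by simp
    then have "2 * ?M * sqrt (lam 1 s) \<le> 2 * ?M * sqrt \<bar>K\<bar>"
      using \<Gamma>_nonneg C_nonneg lam0_pos by (intro mult_left_mono) auto
    then show ?thesis
      using abs_lam1_derivative_le[OF that] by linarith
  qed
  moreover have "0 \<le> 2 * (\<Gamma> * C) + 2 * ?M * sqrt \<bar>K\<bar>"
    using \<Gamma>_nonneg C_nonneg lam0_pos by simp
  ultimately show ?thesis by blast
qed

lemma PLE_estimates:
  "(\<exists>D. (\<forall>s\<in>I. (lam 1 has_real_derivative D s) (at s within I)) \<and> (\<exists>C0\<ge>0. \<forall>s\<in>I. \<bar>D s\<bar> \<le> C0)) \<and>
   (\<forall>s\<in>I. ((\<lambda>t. sqrt (lam 1 t)) has_real_derivative (a 1 s / sqrt (lam 1 s) * h s + f s))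
      (at s within I)) \<and>
   bounded (f ` I) \<and> bounded (lam 1 ` I)"
proof (intro conjI)
  show "bounded (f ` I)"
    using abs_f_le by (auto simp: bounded_real)
  obtain K where K: "\<And>s. s \<in> I \<Longrightarrow> lam 1 s \<le> K"
    using lam1_bounded by blast
  have "\<bar>lam 1 s\<bar> \<le> K" if "s \<in> I" for s
    using K[OF that] lam_pos[OF that one_in_indices] by simp
  then show "bounded (lam 1 ` I)"
    unfolding bounded_real by blast
  show "\<exists>D. (\<forall>s\<in>I. (lam 1 has_real_derivative D s) (at s within I)) \<and> (\<exists>C0\<ge>0. \<forall>s\<in>I. \<bar>D s\<bar> \<le> C0)"
    using lam1_has_derivative lam1_derivative_bounded
    by (intro exI[of _ "\<lambda>s. 2 * (a 1 s * h s + sqrt (lam 1 s) * f s)"]) simp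
qed (use sqrt_lam1_has_derivative in blast)

end

theorem proposition3p1:
  fixes F :: "'a::{real_inner,complete_space} \<Rightarrow> real^'n"
    and DF :: "'a \<Rightarrow> ('a \<Rightarrow>\<^sub>L (real^'n))"
    and D2F :: "'a \<Rightarrow> ('a \<Rightarrow>\<^sub>L ('a \<Rightarrow>\<^sub>L (real^'n)))"
    and \<gamma> \<gamma>' \<gamma>'' :: "real \<Rightarrow> real^'n"
    and u :: "real \<Rightarrow> 'a" and u0 :: 'a
    and z :: "nat \<Rightarrow> real \<Rightarrow> real^'n"
    and C :: real
  assumes F_deriv: "\<And>x. (F has_derivative blinfun_apply (DF x)) (at x)"
    and DF_deriv: "\<And>x. (DF has_derivative blinfun_apply (D2F x)) (at x)"
    and D2F_cont: "continuous_on UNIV D2F"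
    and assmA: "\<exists>lam0>0. \<forall>x. \<forall>i\<in>{2..CARD('n)}. eigval (Gop (DF x)) i \<ge> lam0"
    and C_pos: "C > 0"
    and D2F_bound: "\<And>x w v y. norm w = 1 \<Longrightarrow>
        \<bar>w \<bullet> blinfun_apply (blinfun_apply (D2F x) v) y\<bar> \<le> C * norm v * norm y"
    and gamma_d1: "\<And>t. t \<in> {0..1} \<Longrightarrow> (\<gamma> has_vector_derivative \<gamma>' t) (at t within {0..1})"
    and gamma_d2: "\<And>t. t \<in> {0..1} \<Longrightarrow> (\<gamma>' has_vector_derivative \<gamma>'' t) (at t within {0..1})"
    and gamma_C2: "continuous_on {0..1} \<gamma>''"
    and u0_reg: "det (matrix (Gop (DF u0))) \<noteq> 0"
    and u0_F: "F u0 = \<gamma> 0"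
    and u_init: "u 0 = u0"
    and u_PLE: "\<And>s. s \<in> {0..<Sup {\<sigma>. \<sigma> \<in> {0..<1} \<and> (\<forall>t\<in>{0..\<sigma>}. eigval (Gop (DF (u t))) 1 > 0)}} \<Longrightarrow>
        (u has_vector_derivative
           adjoint (blinfun_apply (DF (u s))) (matrix_inv (matrix (Gop (DF (u s)))) *v \<gamma>' s))
        (at s within {0..<Sup {\<sigma>. \<sigma> \<in> {0..<1} \<and> (\<forall>t\<in>{0..\<sigma>}. eigval (Gop (DF (u t))) 1 > 0)}})"
    and z_orth: "\<And>s i j. s \<in> {0..<Sup {\<sigma>. \<sigma> \<in> {0..<1} \<and> (\<forall>t\<in>{0..\<sigma>}. eigval (Gop (DF (u t))) 1 > 0)}} \<Longrightarrow>
        i \<in> {1..CARD('n)} \<Longrightarrow> j \<in> {1..CARD('n)} \<Longrightarrow> z i s \<bullet> z j s = (if i = j then 1 else 0)"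
    and z_eig: "\<And>s i. s \<in> {0..<Sup {\<sigma>. \<sigma> \<in> {0..<1} \<and> (\<forall>t\<in>{0..\<sigma>}. eigval (Gop (DF (u t))) 1 > 0)}} \<Longrightarrow>
        i \<in> {1..CARD('n)} \<Longrightarrow> Gop (DF (u s)) (z i s) = eigval (Gop (DF (u s))) i *\<^sub>R z i s"
    and z_cont: "\<And>i. i \<in> {1..CARD('n)} \<Longrightarrow>
        continuous_on {0..<Sup {\<sigma>. \<sigma> \<in> {0..<1} \<and> (\<forall>t\<in>{0..\<sigma>}. eigval (Gop (DF (u t))) 1 > 0)}} (z i)"
    and z1_diff: "\<And>s. s \<in> {0..<Sup {\<sigma>. \<sigma> \<in> {0..<1} \<and> (\<forall>t\<in>{0..\<sigma>}. eigval (Gop (DF (u t))) 1 > 0)}} \<Longrightarrow>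
        z 1 differentiable (at s within {0..<Sup {\<sigma>. \<sigma> \<in> {0..<1} \<and> (\<forall>t\<in>{0..\<sigma>}. eigval (Gop (DF (u t))) 1 > 0)}})"
  shows "let I = {0..<Sup {\<sigma>. \<sigma> \<in> {0..<1} \<and> (\<forall>t\<in>{0..\<sigma>}. eigval (Gop (DF (u t))) 1 > 0)}};
             lam = (\<lambda>i s. eigval (Gop (DF (u s))) i);
             a = (\<lambda>i s. \<gamma>' s \<bullet> z i s);
             v = (\<lambda>i s. (1 / sqrt (lam i s)) *\<^sub>R adjoint (blinfun_apply (DF (u s))) (z i s));
             h = (\<lambda>s. z 1 s \<bullet> blinfun_apply (blinfun_apply (D2F (u s)) (v 1 s)) (v 1 s));
             f = (\<lambda>s. \<Sum>i = 2..CARD('n). a i s / sqrt (lam i s) *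
                        (z 1 s \<bullet> blinfun_apply (blinfun_apply (D2F (u s)) (v i s)) (v 1 s)))
         in (\<exists>D. (\<forall>s\<in>I. (lam 1 has_real_derivative D s) (at s within I)) \<and>
                 (\<exists>C0\<ge>0. \<forall>s\<in>I. \<bar>D s\<bar> \<le> C0)) \<and>
            (\<forall>s\<in>I. ((\<lambda>t. sqrt (lam 1 t)) has_real_derivative
                        (a 1 s / sqrt (lam 1 s) * h s + f s)) (at s within I)) \<and>
            bounded (f ` I) \<and> bounded (lam 1 ` I)"
proof -
  let ?I = "{0..<Sup {\<sigma>. \<sigma> \<in> {0..<1} \<and> (\<forall>t\<in>{0..\<sigma>}. eigval (Gop (DF (u t))) 1 > 0)}}"
  obtain lam0 where lam0: "lam0 > 0" "\<And>x i. i \<in> {2..CARD('n)} \<Longrightarrow> lam0 \<le> eigval (Gop (DF x)) i"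
    using assmA by blast
  have "compact (\<gamma>' ` {0..1})"
    by (intro compact_continuous_image continuous_on_vector_derivative[OF gamma_d2]) auto
  then obtain \<Gamma> where \<Gamma>: "\<Gamma> > 0" "\<And>t. t \<in> {0..1} \<Longrightarrow> norm (\<gamma>' t) \<le> \<Gamma>"
    by (auto dest!: compact_imp_bounded simp: bounded_pos)
  have on_I: "eigval (Gop (DF (u s))) 1 > 0" "s < 1" "norm (\<gamma>' s) \<le> \<Gamma>" if "s \<in> ?I" for s
  proof -
    have "0 \<in> ?I" using that by simp
    have "eigval (Gop (DF (u 0))) 1 > 0"
      by (rule Gop_eigenvalue_pos[OF u0_reg[folded u_init] z_eig[OF \<open>0 \<in> ?I\<close>]])
        (use z_orth[OF \<open>0 \<in> ?I\<close>, of 1 1] in \<open>auto simp: norm_eq_1\<close>)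
    then show "eigval (Gop (DF (u s))) 1 > 0" "s < 1"
      using positive_below_Sup_positive_prefix[OF that] by auto
    then show "norm (\<gamma>' s) \<le> \<Gamma>"
      using \<Gamma>(2) that by simp
  qed
  interpret PLE_solution DF D2F \<gamma>' u z ?I
      "Sup {\<sigma>. \<sigma> \<in> {0..<1} \<and> (\<forall>t\<in>{0..\<sigma>}. eigval (Gop (DF (u t))) 1 > 0)}" C lam0 \<Gamma>
    using less_imp_le[OF C_pos] less_imp_le[OF \<Gamma>(1)]
    by unfold_locales
      (assumption | rule refl DF_deriv lam0 D2F_bound on_I u_PLE z_orth z_eig z1_diff)+
  show ?thesis
    using PLE_estimates unfolding Let_def lam_def[abs_def] a_def[abs_def] v_def[abs_def]
      h_def[abs_def] f_def[abs_def] .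
qed

end
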